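(* Let $D$ be an integral domain. The following are equivalent: (i) $D$ is a PvMD; (ii) $D$ is essential and admits an essential representation of the form $\{D_{\mathfrak p}:\mathfrak p\in Y\}$, where $Y\subseteq\operatorname{Spec}(D)$ is quasi-compact with respect to the Zariski topology.
   Context: All rings are commutative with identity. For an integral domain $D$ with quotient field $K$ and nonzero fractional ideal $I$: $(D:I)=\{x\in K:xI\subseteq D\}$, $I^v=(D:(D:I))$, $I^t=\bigcup\{J^v:J\subseteq I \text{ finitely generated}\}$; $t$-ideals are $(0)$ and ideals with $I=I^t$; $t$-maximal ideals are $t$-ideals maximal among proper $t$-ideals. $D$ is a PvMD if $D_{\mathfrak m}$ is a valuation domain for all $t$-maximal $\mathfrak m$. A valuation overring is essential if it equals $D_{\mathfrak p}$ for a prime $\mathfrak p$; an essential representation of $D$ is a family of essential valuation overrings of $D$ with intersection $D$; $D$ is essential if it has one. The Zariski topology on $\operatorname{Spec}(D)$ has closed sets $V(\mathfrak a)=\{\mathfrak p:\mathfrak a\subseteq\mathfrak p\}$. *)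

theory Defs
  imports Main
begin

text \<open>Convention: the integral domain D is a subring of a field type 'a whose
  elements are exactly the fractions of D, i.e. 'a (= UNIV) is the quotient field K.\<close>

definition subring_of :: "'a::field set \<Rightarrow> bool" where
  "subring_of D \<longleftrightarrow> 0 \<in> D \<and> 1 \<in> D \<and> (\<forall>x\<in>D. \<forall>y\<in>D. x + y \<in> D \<and> x * y \<in> D \<and> - x \<in> D)"

definition integral_domain_with_qf_UNIV :: "'a::field set \<Rightarrow> bool" where
  "integral_domain_with_qf_UNIV D \<longleftrightarrow> subring_of D \<and>
     (\<forall>x::'a. \<exists>a\<in>D. \<exists>b\<in>D. b \<noteq> 0 \<and> x = a / b)"

definition ideal_of :: "'a::field set \<Rightarrow> 'a set \<Rightarrow> bool" where
  "ideal_of D I \<longleftrightarrow> I \<subseteq> D \<and> 0 \<in> I \<and> (\<forall>x\<in>I. \<forall>y\<in>I. x + y \<in> I) \<and> (\<forall>d\<in>D. \<forall>x\<in>I. d * x \<in> I)"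

definition prime_ideal_of :: "'a::field set \<Rightarrow> 'a set \<Rightarrow> bool" where
  "prime_ideal_of D p \<longleftrightarrow> ideal_of D p \<and> p \<noteq> D \<and>
     (\<forall>a\<in>D. \<forall>b\<in>D. a * b \<in> p \<longrightarrow> a \<in> p \<or> b \<in> p)"

definition Spec :: "'a::field set \<Rightarrow> 'a set set" where
  "Spec D = {p. prime_ideal_of D p}"

definition colon :: "'a::field set \<Rightarrow> 'a set \<Rightarrow> 'a set" where
  "colon D I = {x. \<forall>y\<in>I. x * y \<in> D}"

definition v_op :: "'a::field set \<Rightarrow> 'a set \<Rightarrow> 'a set" where
  "v_op D I = colon D (colon D I)"

definition gen_by :: "'a::field set \<Rightarrow> 'a set \<Rightarrow> 'a set" where
  "gen_by D A = {(\<Sum>a\<in>A. f a * a) | f. \<forall>a\<in>A. f a \<in> D}"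

definition t_op :: "'a::field set \<Rightarrow> 'a set \<Rightarrow> 'a set" where
  "t_op D I = \<Union>{v_op D J | J. J \<subseteq> I \<and> J \<noteq> {0} \<and> (\<exists>A. finite A \<and> J = gen_by D A)}"

definition t_ideal :: "'a::field set \<Rightarrow> 'a set \<Rightarrow> bool" where
  "t_ideal D I \<longleftrightarrow> ideal_of D I \<and> (I = {0} \<or> I = t_op D I)"

definition t_maximal :: "'a::field set \<Rightarrow> 'a set \<Rightarrow> bool" where
  "t_maximal D m \<longleftrightarrow> t_ideal D m \<and> m \<noteq> D \<and>
     (\<forall>J. t_ideal D J \<and> J \<noteq> D \<and> m \<subseteq> J \<longrightarrow> J = m)"

definition localization :: "'a::field set \<Rightarrow> 'a set \<Rightarrow> 'a set" where
  "localization D p = {a / s | a s. a \<in> D \<and> s \<in> D \<and> s \<notin> p}"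

definition valuation_domain :: "'a::field set \<Rightarrow> bool" where
  "valuation_domain V \<longleftrightarrow> subring_of V \<and> (\<forall>x::'a. x \<noteq> 0 \<longrightarrow> x \<in> V \<or> inverse x \<in> V)"

definition PvMD :: "'a::field set \<Rightarrow> bool" where
  "PvMD D \<longleftrightarrow> (\<forall>m. t_maximal D m \<longrightarrow> valuation_domain (localization D m))"

definition essential_valuation_overring :: "'a::field set \<Rightarrow> 'a set \<Rightarrow> bool" where
  "essential_valuation_overring D V \<longleftrightarrow> valuation_domain V \<and> D \<subseteq> V \<and>
     (\<exists>p\<in>Spec D. V = localization D p)"

definition essential_representation :: "'a::field set \<Rightarrow> 'a set set \<Rightarrow> bool" where
  "essential_representation D \<V> \<longleftrightarrow>
     (\<forall>V\<in>\<V>. essential_valuation_overring D V) \<and> \<Inter>\<V> = D"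

definition essential_domain :: "'a::field set \<Rightarrow> bool" where
  "essential_domain D \<longleftrightarrow> (\<exists>\<V>. essential_representation D \<V>)"

definition zariski_V :: "'a::field set \<Rightarrow> 'a set \<Rightarrow> 'a set set" where
  "zariski_V D S = {p \<in> Spec D. S \<subseteq> p}"

text \<open>Quasi-compactness in the Zariski topology: the open sets are exactly
  Spec D - V(S) for S \<subseteq> D; every open cover of Y has a finite subcover.\<close>
definition zariski_quasi_compact :: "'a::field set \<Rightarrow> 'a set set \<Rightarrow> bool" where
  "zariski_quasi_compact D Y \<longleftrightarrow> Y \<subseteq> Spec D \<and>
     (\<forall>\<A>. (\<forall>S\<in>\<A>. S \<subseteq> D) \<and> Y \<subseteq> (\<Union>S\<in>\<A>. Spec D - zariski_V D S) \<longrightarrow>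
        (\<exists>\<B>\<subseteq>\<A>. finite \<B> \<and> Y \<subseteq> (\<Union>S\<in>\<B>. Spec D - zariski_V D S)))"

end

theory Submission
  imports Defs
begin

(* The central tool is the notion of a v-proper ideal: one none of whose nonzero finitely
   generated subideals J has J^v = D.  Proper t-ideals are v-proper, and by Zorn's lemma
   every v-proper ideal is contained in a t-maximal ideal (an ideal maximal among the
   v-proper ones is t-maximal).  Three consequences drive the proof:
   - D is the intersection of its localizations at t-maximal ideals (conductor argument);
   - if all t-maximal ideals are prime, they form a quasi-compact subspace of Spec D;
   - a prime p with D_p a valuation domain is a t-ideal.
   (i) \<Rightarrow> (ii): for a PvMD take Y = the t-maximal ideals; they are prime since their
   localizations are valuation domains.
   (ii) \<Rightarrow> (i): quasi-compactness of Y and D = \<Inter>{D_p : p \<in> Y} force every nonzero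
   t-maximal m below some p \<in> Y; p is a proper t-ideal, so p = m and D_m = D_p is a
   valuation domain. *)

definition module_of :: "'a::field set \<Rightarrow> 'a set \<Rightarrow> bool" where
  "module_of D M \<longleftrightarrow> 0 \<in> M \<and> (\<forall>x\<in>M. \<forall>y\<in>M. x + y \<in> M) \<and> (\<forall>d\<in>D. \<forall>x\<in>M. d * x \<in> M)"

lemma subring_zero: "subring_of D \<Longrightarrow> 0 \<in> D"
  and subring_one: "subring_of D \<Longrightarrow> 1 \<in> D"
  and subring_add: "subring_of D \<Longrightarrow> x \<in> D \<Longrightarrow> y \<in> D \<Longrightarrow> x + y \<in> D"
  and subring_mult: "subring_of D \<Longrightarrow> x \<in> D \<Longrightarrow> y \<in> D \<Longrightarrow> x * y \<in> D"
  by (simp_all add: subring_of_def)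

lemma module_of_subring: "subring_of D \<Longrightarrow> module_of D D"
  unfolding module_of_def by (auto intro: subring_zero subring_add subring_mult)

lemma module_of_ideal: "ideal_of D I \<Longrightarrow> module_of D I"
  unfolding ideal_of_def module_of_def by blast

lemma module_of_zero: "module_of D {0}"
  unfolding module_of_def by simp

lemma colon_module: "subring_of D \<Longrightarrow> module_of D (colon D X)"
  unfolding module_of_def colon_def
  by (auto simp: distrib_right mult.assoc intro: subring_zero subring_add subring_mult)

lemma sum_in_module:
  assumes "module_of D M" "finite A" "\<And>a. a \<in> A \<Longrightarrow> g a \<in> M"
  shows "sum g A \<in> M"
  using assms(2,3) by induction (use assms(1) in \<open>auto simp: module_of_def\<close>)

lemma gen_by_module:
  assumes "subring_of D" shows "module_of D (gen_by D A)"
  unfolding module_of_def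
proof (intro conjI ballI)
  show "0 \<in> gen_by D A"
    unfolding gen_by_def using subring_zero[OF assms] by (auto intro!: exI[of _ "\<lambda>_. 0"])
next
  fix x y assume "x \<in> gen_by D A" "y \<in> gen_by D A"
  then obtain f g where "x = (\<Sum>a\<in>A. f a * a)" "\<forall>a\<in>A. f a \<in> D"
    and "y = (\<Sum>a\<in>A. g a * a)" "\<forall>a\<in>A. g a \<in> D" unfolding gen_by_def by blast
  then show "x + y \<in> gen_by D A" unfolding gen_by_def
    by (intro CollectI exI[of _ "\<lambda>a. f a + g a"])
       (simp add: sum.distrib distrib_right subring_add[OF assms])
next
  fix d x assume "d \<in> D" "x \<in> gen_by D A"
  then obtain f where "x = (\<Sum>a\<in>A. f a * a)" "\<forall>a\<in>A. f a \<in> D" unfolding gen_by_def by blast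
  with \<open>d \<in> D\<close> show "d * x \<in> gen_by D A" unfolding gen_by_def
    by (intro CollectI exI[of _ "\<lambda>a. d * f a"])
       (simp add: sum_distrib_left mult.assoc subring_mult[OF assms])
qed

lemma gen_by_least:
  assumes "finite A" "module_of D M" "A \<subseteq> M"
  shows "gen_by D A \<subseteq> M"
proof
  fix x assume "x \<in> gen_by D A"
  then obtain f where f: "x = (\<Sum>a\<in>A. f a * a)" "\<forall>a\<in>A. f a \<in> D" unfolding gen_by_def by blast
  show "x \<in> M" unfolding f(1)
    by (rule sum_in_module[OF assms(2,1)]) (use f assms(2,3) in \<open>auto simp: module_of_def\<close>)
qed

lemma gen_by_self:
  assumes "subring_of D" "finite A" shows "A \<subseteq> gen_by D A"
proof
  fix a assume "a \<in> A"
  have "(\<Sum>b\<in>A. (if b = a then 1 else 0) * b) = (\<Sum>b\<in>A. if b = a then b else 0)"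
    by (rule sum.cong) auto
  also have "\<dots> = a" using \<open>a \<in> A\<close> assms(2) by (simp add: sum.delta)
  finally have "(\<Sum>b\<in>A. (if b = a then 1 else 0) * b) = a" .
  then show "a \<in> gen_by D A" unfolding gen_by_def
    using subring_zero[OF assms(1)] subring_one[OF assms(1)]
    by (intro CollectI exI[of _ "\<lambda>b. if b = a then 1 else 0"]) auto
qed

lemma gen_by_mono:
  "subring_of D \<Longrightarrow> finite B \<Longrightarrow> A \<subseteq> B \<Longrightarrow> gen_by D A \<subseteq> gen_by D B"
  by (meson finite_subset gen_by_least gen_by_module gen_by_self order_trans)

lemma gen_by_eq_zero_iff:
  assumes "subring_of D" "finite A" shows "gen_by D A = {0} \<longleftrightarrow> A \<subseteq> {0}"
  using gen_by_self[OF assms] gen_by_least[OF assms(2) module_of_zero]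
    gen_by_module[OF assms(1), of A] unfolding module_of_def by blast

lemma gen_by_in_ideal:
  "subring_of D \<Longrightarrow> ideal_of D I \<Longrightarrow> finite A \<Longrightarrow> A \<subseteq> I \<Longrightarrow> gen_by D A \<subseteq> I"
  by (rule gen_by_least) (auto intro: module_of_ideal)

lemma ideal_with_one: "ideal_of D I \<Longrightarrow> 1 \<in> I \<Longrightarrow> I = D"
  unfolding ideal_of_def by (metis mult_1_right subsetI subset_antisym)

lemma colon_gen_by:
  assumes "subring_of D" "finite A"
  shows "colon D (gen_by D A) = {y. \<forall>a\<in>A. y * a \<in> D}"
proof
  show "colon D (gen_by D A) \<subseteq> {y. \<forall>a\<in>A. y * a \<in> D}"
    using gen_by_self[OF assms] unfolding colon_def by blast
next
  show "{y. \<forall>a\<in>A. y * a \<in> D} \<subseteq> colon D (gen_by D A)"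
  proof (intro subsetI CollectI)
    fix y assume y: "y \<in> {y. \<forall>a\<in>A. y * a \<in> D}"
    have "module_of D {j. y * j \<in> D}"
      using module_of_subring[OF assms(1)]
      by (auto simp: module_of_def distrib_left mult.left_commute)
    then have "gen_by D A \<subseteq> {j. y * j \<in> D}"
      using y by (intro gen_by_least[OF assms(2)]) auto
    then show "y \<in> colon D (gen_by D A)" unfolding colon_def by blast
  qed
qed

text \<open>J^v = D, i.e. 1 \<in> J^v, holds iff (D:J) \<subseteq> D.\<close>

lemma one_in_v_op_iff: "1 \<in> v_op D J \<longleftrightarrow> colon D J \<subseteq> D"
  unfolding v_op_def colon_def by auto

lemma v_op_ext: "J \<subseteq> v_op D J"
  unfolding v_op_def colon_def by (auto simp: mult.commute)

lemma colon_antimono: "J \<subseteq> J' \<Longrightarrow> colon D J' \<subseteq> colon D J"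
  unfolding colon_def by blast

lemma v_op_mono: "J \<subseteq> J' \<Longrightarrow> v_op D J \<subseteq> v_op D J'"
  unfolding v_op_def by (intro colon_antimono)

lemma colon_v_op: "colon D (v_op D J) = colon D J"
proof
  show "colon D (v_op D J) \<subseteq> colon D J" by (rule colon_antimono[OF v_op_ext])
  show "colon D J \<subseteq> colon D (v_op D J)" unfolding v_op_def colon_def by (auto simp: mult.commute)
qed

lemma v_op_least: "J \<subseteq> v_op D J' \<Longrightarrow> v_op D J \<subseteq> v_op D J'"
  by (metis colon_v_op v_op_def v_op_mono)

lemma v_op_module: "subring_of D \<Longrightarrow> module_of D (v_op D J)"
  unfolding v_op_def by (rule colon_module)

lemma v_op_subset:
  assumes "subring_of D" "J \<subseteq> D" shows "v_op D J \<subseteq> D"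
proof
  fix x assume "x \<in> v_op D J"
  moreover have "1 \<in> colon D J" using assms(2) by (auto simp: colon_def)
  ultimately have "x * 1 \<in> D" unfolding v_op_def colon_def by blast
  then show "x \<in> D" by simp
qed

lemma v_op_subset_t_op:
  "finite A \<Longrightarrow> gen_by D A \<subseteq> I \<Longrightarrow> gen_by D A \<noteq> {0} \<Longrightarrow> v_op D (gen_by D A) \<subseteq> t_op D I"
  unfolding t_op_def by blast

text \<open>Every nonzero ideal P satisfies P \<subseteq> P^t: x \<in> P lies in the v-closure of the
  nonzero subideal generated by x and a fixed nonzero z \<in> P.\<close>

lemma t_op_subset_self:
  assumes sub: "subring_of D" and P: "ideal_of D P" "P \<noteq> {0}"
  shows "P \<subseteq> t_op D P"
proof
  fix x assume x: "x \<in> P"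
  obtain z where z: "z \<in> P" "z \<noteq> 0" using P unfolding ideal_of_def by blast
  let ?J = "gen_by D {x, z}"
  have xz: "{x, z} \<subseteq> ?J" by (rule gen_by_self[OF sub]) simp
  have "?J \<subseteq> P" by (rule gen_by_in_ideal[OF sub P(1)]) (use x z in auto)
  moreover have "?J \<noteq> {0}" using xz z by blast
  ultimately have "v_op D ?J \<subseteq> t_op D P" by (intro v_op_subset_t_op) auto
  then show "x \<in> t_op D P" using xz v_op_ext by blast
qed

lemma t_idealI: "subring_of D \<Longrightarrow> ideal_of D P \<Longrightarrow> t_op D P \<subseteq> P \<Longrightarrow> t_ideal D P"
  unfolding t_ideal_def using t_op_subset_self by blast

lemma t_ideal_v_closed:
  assumes sub: "subring_of D" and m: "t_ideal D m"
    and A: "finite A" "A \<subseteq> m" "gen_by D A \<noteq> {0}"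
  shows "v_op D (gen_by D A) \<subseteq> m"
proof -
  have "gen_by D A \<subseteq> m" using gen_by_in_ideal[OF sub _ A(1,2)] m unfolding t_ideal_def by blast
  moreover have "m \<noteq> {0}" using A gen_by_eq_zero_iff[OF sub A(1)] by blast
  then have "m = t_op D m" using m unfolding t_ideal_def by blast
  ultimately show ?thesis using v_op_subset_t_op[OF A(1) _ A(3)] by blast
qed

definition v_proper :: "'a::field set \<Rightarrow> 'a set \<Rightarrow> bool" where
  "v_proper D I \<longleftrightarrow>
     (\<forall>A. finite A \<and> A \<subseteq> I \<and> gen_by D A \<noteq> {0} \<longrightarrow> 1 \<notin> v_op D (gen_by D A))"

lemma proper_t_ideal_v_proper:
  assumes sub: "subring_of D" and "t_ideal D m" "m \<noteq> D"
  shows "v_proper D m"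
  unfolding v_proper_def
proof (intro allI impI notI)
  fix A assume A: "finite A \<and> A \<subseteq> m \<and> gen_by D A \<noteq> {0}" "1 \<in> v_op D (gen_by D A)"
  then have "1 \<in> m" using t_ideal_v_closed[OF sub assms(2)] by blast
  then show False using ideal_with_one assms(2,3) unfolding t_ideal_def by blast
qed

lemma v_proper_not_one:
  assumes sub: "subring_of D" and "v_proper D P" shows "1 \<notin> P"
proof
  assume "1 \<in> P"
  have "1 \<in> gen_by D {1}" using gen_by_self[OF sub] by blast
  then have "gen_by D {1} \<noteq> {0}" "1 \<in> v_op D (gen_by D {1})" using v_op_ext by auto
  then show False using assms(2) \<open>1 \<in> P\<close> unfolding v_proper_def by blast
qed

text \<open>The union of a nonempty chain of v-proper ideals is a v-proper ideal, since finitely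
  many generators already lie in a single member of the chain.\<close>

lemma v_proper_Union_chain:
  assumes ne: "\<C> \<noteq> {}" and ch: "subset.chain {P. ideal_of D P \<and> v_proper D P} \<C>"
  shows "ideal_of D (\<Union>\<C>) \<and> v_proper D (\<Union>\<C>)"
proof
  have id: "ideal_of D P" "v_proper D P" if "P \<in> \<C>" for P
    using that ch unfolding subset_chain_def by auto
  have cmp: "X \<subseteq> Y \<or> Y \<subseteq> X" if "X \<in> \<C>" "Y \<in> \<C>" for X Y
    using that ch unfolding subset_chain_def by blast
  show "ideal_of D (\<Union>\<C>)" unfolding ideal_of_def
  proof (intro conjI ballI)
    show "\<Union>\<C> \<subseteq> D" using id(1) unfolding ideal_of_def by blast
    show "0 \<in> \<Union>\<C>" using id(1) ne unfolding ideal_of_def by blast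
    show "x + y \<in> \<Union>\<C>" if xy: "x \<in> \<Union>\<C>" "y \<in> \<Union>\<C>" for x y
    proof -
      obtain X Y where XY: "X \<in> \<C>" "Y \<in> \<C>" "x \<in> X" "y \<in> Y" using xy by blast
      then obtain Z where "Z \<in> \<C>" "x \<in> Z" "y \<in> Z" using cmp[OF XY(1,2)] by blast
      then show ?thesis using id(1)[of Z] unfolding ideal_of_def by blast
    qed
    show "d * x \<in> \<Union>\<C>" if "d \<in> D" "x \<in> \<Union>\<C>" for d x
      using that id(1) unfolding ideal_of_def by blast
  qed
  show "v_proper D (\<Union>\<C>)" unfolding v_proper_def
  proof (intro allI impI)
    fix A assume A: "finite A \<and> A \<subseteq> \<Union>\<C> \<and> gen_by D A \<noteq> {0}"
    then obtain B where "B \<in> \<C>" "A \<subseteq> B" using finite_subset_Union_chain[OF _ _ ne ch] by blast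
    then show "1 \<notin> v_op D (gen_by D A)" using A id(2) unfolding v_proper_def by blast
  qed
qed

lemma ideal_adjoin:
  assumes sub: "subring_of D" and P: "ideal_of D P" and y: "y \<in> D"
  shows "ideal_of D {p + d * y | p d. p \<in> P \<and> d \<in> D}" (is "ideal_of D ?Q")
  unfolding ideal_of_def
proof (intro conjI ballI)
  show "?Q \<subseteq> D" using P y sub unfolding ideal_of_def by (auto intro: subring_add subring_mult)
  show "0 \<in> ?Q" using P subring_zero[OF sub] unfolding ideal_of_def by force
  show "x + z \<in> ?Q" if xz: "x \<in> ?Q" "z \<in> ?Q" for x z
  proof -
    obtain p1 d1 p2 d2 where e: "x = p1 + d1 * y" "z = p2 + d2 * y"
      "p1 \<in> P" "p2 \<in> P" "d1 \<in> D" "d2 \<in> D" using xz by blast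
    have "x + z = (p1 + p2) + (d1 + d2) * y" using e by (simp add: algebra_simps)
    moreover have "p1 + p2 \<in> P" "d1 + d2 \<in> D"
      using e P sub unfolding ideal_of_def by (auto intro: subring_add)
    ultimately show ?thesis by blast
  qed
  show "e * x \<in> ?Q" if ex: "e \<in> D" "x \<in> ?Q" for e x
  proof -
    obtain p d where q: "x = p + d * y" "p \<in> P" "d \<in> D" using ex by blast
    have "e * x = e * p + (e * d) * y" using q by (simp add: algebra_simps)
    moreover have "e * p \<in> P" "e * d \<in> D"
      using q ex P sub unfolding ideal_of_def by (auto intro: subring_mult)
    ultimately show ?thesis by blast
  qed
qed

text \<open>If y lies in the v-closure of a finitely generated nonzero ideal (A0) \<subseteq> P, then
  P + Dy stays v-proper: every finitely generated subideal of P + Dy has v-closure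
  inside (A')^v for a finite A' \<subseteq> P.\<close>

lemma v_proper_adjoin:
  assumes sub: "subring_of D" and P: "v_proper D P"
    and A0: "finite A0" "A0 \<subseteq> P" "gen_by D A0 \<noteq> {0}" and y: "y \<in> v_op D (gen_by D A0)"
  shows "v_proper D {p + d * y | p d. p \<in> P \<and> d \<in> D}"
  unfolding v_proper_def
proof (intro allI impI notI)
  fix A assume A: "finite A \<and> A \<subseteq> {p + d * y | p d. p \<in> P \<and> d \<in> D} \<and> gen_by D A \<noteq> {0}"
    and one: "1 \<in> v_op D (gen_by D A)"
  have "\<forall>a\<in>A. \<exists>p d. a = p + d * y \<and> p \<in> P \<and> d \<in> D" using A by blast
  then obtain pp dd where pd: "\<And>a. a \<in> A \<Longrightarrow> a = pp a + dd a * y \<and> pp a \<in> P \<and> dd a \<in> D"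
    by metis
  define A' where "A' = pp ` A \<union> A0"
  have fA': "finite A'" "A' \<subseteq> P" using A A0 pd unfolding A'_def by auto
  have ne: "gen_by D A' \<noteq> {0}"
    using gen_by_eq_zero_iff[OF sub A0(1)] gen_by_eq_zero_iff[OF sub fA'(1)] A0(3)
    unfolding A'_def by blast
  let ?V = "v_op D (gen_by D A')"
  have V: "module_of D ?V" by (rule v_op_module[OF sub])
  have "y \<in> ?V" using y v_op_mono[OF gen_by_mono[OF sub fA'(1)]] unfolding A'_def by blast
  moreover have "pp ` A \<subseteq> ?V" using v_op_ext gen_by_self[OF sub fA'(1)] unfolding A'_def by blast
  ultimately have "A \<subseteq> ?V" using pd V unfolding module_of_def by (metis image_subset_iff subsetI)
  then have "gen_by D A \<subseteq> ?V" using gen_by_least[OF _ V] A by blast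
  then have "1 \<in> ?V" using v_op_least one by blast
  then show False using P fA' ne unfolding v_proper_def by blast
qed

text \<open>An ideal P maximal among the v-proper ideals is t-maximal: for y \<in> P^t the ideal
  P + Dy is again v-proper, hence equal to P, so P is a t-ideal; and any proper t-ideal
  above P is v-proper, hence equal to P.\<close>

lemma maximal_v_proper_t_maximal:
  assumes sub: "subring_of D" and P: "ideal_of D P" "v_proper D P"
    and max: "\<And>Q. ideal_of D Q \<Longrightarrow> v_proper D Q \<Longrightarrow> P \<subseteq> Q \<Longrightarrow> Q = P"
  shows "t_maximal D P"
proof -
  have "t_op D P \<subseteq> P"
  proof
    fix y assume "y \<in> t_op D P"
    then obtain A0 where A0: "y \<in> v_op D (gen_by D A0)" "gen_by D A0 \<subseteq> P"
      "gen_by D A0 \<noteq> {0}" "finite A0" unfolding t_op_def by blast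
    have A0P: "A0 \<subseteq> P" using gen_by_self[OF sub A0(4)] A0(2) by blast
    have "gen_by D A0 \<subseteq> D" using A0(2) P(1) unfolding ideal_of_def by blast
    then have yD: "y \<in> D" using v_op_subset[OF sub] A0(1) by blast
    let ?Q = "{p + d * y | p d. p \<in> P \<and> d \<in> D}"
    have "P \<subseteq> ?Q" using subring_zero[OF sub] by force
    moreover have "y \<in> ?Q"
      using P(1) subring_one[OF sub] unfolding ideal_of_def
      by (intro CollectI exI[of _ 0] exI[of _ 1]) simp
    ultimately show "y \<in> P"
      using max[OF ideal_adjoin[OF sub P(1) yD] v_proper_adjoin[OF sub P(2) A0(4) A0P A0(3,1)]]
      by blast
  qed
  then have tP: "t_ideal D P" by (rule t_idealI[OF sub P(1)])
  have "P \<noteq> D" using v_proper_not_one[OF sub P(2)] subring_one[OF sub] by blast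
  moreover have "J = P" if J: "t_ideal D J" "J \<noteq> D" "P \<subseteq> J" for J
  proof (rule max)
    show "ideal_of D J" using J(1) unfolding t_ideal_def by blast
    show "v_proper D J" by (rule proper_t_ideal_v_proper[OF sub J(1,2)])
  qed (use J in blast)
  ultimately show ?thesis unfolding t_maximal_def using tP by blast
qed

lemma v_proper_in_t_maximal:
  assumes sub: "subring_of D" and I: "ideal_of D I" "v_proper D I"
  shows "\<exists>m. t_maximal D m \<and> I \<subseteq> m"
proof -
  define F where "F = {P. ideal_of D P \<and> v_proper D P \<and> I \<subseteq> P}"
  have "\<Union>\<C> \<in> F" if ne: "\<C> \<noteq> {}" and ch: "subset.chain F \<C>" for \<C>
  proof -
    have CF: "\<C> \<subseteq> F" using ch unfolding subset_chain_def by blast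
    have "subset.chain {P. ideal_of D P \<and> v_proper D P} \<C>"
      using ch unfolding subset_chain_def F_def by blast
    then have "ideal_of D (\<Union>\<C>) \<and> v_proper D (\<Union>\<C>)" by (rule v_proper_Union_chain[OF ne])
    moreover have "I \<subseteq> \<Union>\<C>" using CF ne unfolding F_def by blast
    ultimately show ?thesis unfolding F_def by blast
  qed
  moreover have "F \<noteq> {}" using I unfolding F_def by blast
  ultimately obtain P where P: "P \<in> F" and Pmax: "\<forall>X\<in>F. P \<subseteq> X \<longrightarrow> X = P"
    using subset_Zorn_nonempty[of F] by blast
  have "t_maximal D P"
  proof (rule maximal_v_proper_t_maximal[OF sub])
    show "ideal_of D P" "v_proper D P" using P unfolding F_def by auto
    show "Q = P" if "ideal_of D Q" "v_proper D Q" "P \<subseteq> Q" for Q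
      using that P Pmax unfolding F_def by blast
  qed
  then show ?thesis using P unfolding F_def by blast
qed

lemma localization_superset: "subring_of D \<Longrightarrow> 1 \<notin> p \<Longrightarrow> D \<subseteq> localization D p"
  unfolding localization_def using subring_one by force

lemma localization_zero: "integral_domain_with_qf_UNIV D \<Longrightarrow> localization D {0} = UNIV"
  unfolding integral_domain_with_qf_UNIV_def localization_def by blast

lemma valuation_domain_UNIV: "valuation_domain (UNIV :: 'a::field set)"
  unfolding valuation_domain_def subring_of_def by simp

text \<open>If z multiplies a generator a \<notin> p into D, then z = (za)/a lies in D_p.\<close>

lemma colon_gen_by_subset_localization:
  assumes sub: "subring_of D" and A: "finite A" "a \<in> A" "a \<in> D" and p: "0 \<in> p" "a \<notin> p"
  shows "colon D (gen_by D A) \<subseteq> localization D p"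
proof
  fix z assume "z \<in> colon D (gen_by D A)"
  then have "z * a \<in> D" using colon_gen_by[OF sub A(1)] A(2) by blast
  moreover have "z = (z * a) / a" using p by auto
  ultimately show "z \<in> localization D p" unfolding localization_def using A(3) p(2) by blast
qed

lemma conductor_ideal:
  assumes sub: "subring_of D" shows "ideal_of D {d \<in> D. d * x \<in> D}"
  unfolding ideal_of_def
  using subring_zero[OF sub] subring_add[OF sub] subring_mult[OF sub]
  by (auto simp: distrib_right mult.assoc)

text \<open>Every domain is the intersection of its localizations at t-maximal ideals: for
  x \<notin> D the conductor of x is v-proper, hence contained in a t-maximal m, and then
  x \<notin> D_m.\<close>

lemma Inter_localization_t_maximal:
  assumes sub: "subring_of D"
  shows "\<Inter>(localization D ` {m. t_maximal D m}) = D"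
proof
  show "D \<subseteq> \<Inter>(localization D ` {m. t_maximal D m})"
  proof (intro subsetI INT_I)
    fix d m assume d: "d \<in> D" and "m \<in> {m. t_maximal D m}"
    then have "ideal_of D m" "m \<noteq> D" unfolding t_maximal_def t_ideal_def by auto
    then have "1 \<notin> m" using ideal_with_one by blast
    then show "d \<in> localization D m" using localization_superset[OF sub] d by blast
  qed
next
  show "\<Inter>(localization D ` {m. t_maximal D m}) \<subseteq> D"
  proof
    fix x assume x: "x \<in> \<Inter>(localization D ` {m. t_maximal D m})"
    show "x \<in> D"
    proof (rule ccontr)
      assume xD: "x \<notin> D"
      let ?I = "{d \<in> D. d * x \<in> D}"
      have "v_proper D ?I" unfolding v_proper_def
      proof (intro allI impI notI)
        fix A assume A: "finite A \<and> A \<subseteq> ?I \<and> gen_by D A \<noteq> {0}"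
          and "1 \<in> v_op D (gen_by D A)"
        then have "colon D (gen_by D A) \<subseteq> D" by (simp add: one_in_v_op_iff)
        moreover have "\<forall>a\<in>A. x * a \<in> D" using A by (auto simp: mult.commute)
        then have "x \<in> colon D (gen_by D A)" using A by (simp add: colon_gen_by[OF sub])
        ultimately show False using xD by blast
      qed
      then obtain m where m: "t_maximal D m" "?I \<subseteq> m"
        using v_proper_in_t_maximal[OF sub conductor_ideal[OF sub]] by blast
      have "x \<in> localization D m" using x m(1) by blast
      then obtain a s where as: "x = a / s" "a \<in> D" "s \<in> D" "s \<notin> m"
        unfolding localization_def by blast
      have "0 \<in> m" using m unfolding t_maximal_def t_ideal_def ideal_of_def by blast
      then have "s * x = a" using as by auto
      then have "s \<in> ?I" using as by simp
      then show False using m as by blast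
    qed
  qed
qed

lemma t_maximal_prime:
  assumes sub: "subring_of D" and m: "t_maximal D m" and val: "valuation_domain (localization D m)"
  shows "m \<in> Spec D"
proof -
  have mid: "ideal_of D m" and mD: "m \<noteq> D" using m unfolding t_maximal_def t_ideal_def by auto
  have m0: "0 \<in> m" using mid unfolding ideal_of_def by blast
  have "a \<in> m \<or> b \<in> m" if ab: "a \<in> D" "b \<in> D" "a * b \<in> m" for a b
  proof (rule ccontr)
    assume "\<not> (a \<in> m \<or> b \<in> m)"
    then have nm: "a \<notin> m" "b \<notin> m" by auto
    then have nz: "a \<noteq> 0" "b \<noteq> 0" using m0 by auto
    have "1 / a \<in> localization D m" "1 / b \<in> localization D m"
      unfolding localization_def using subring_one[OF sub] ab nm by blast+
    then have "(1 / a) * (1 / b) \<in> localization D m"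
      using val unfolding valuation_domain_def subring_of_def by blast
    then obtain c u where cu: "1 / (a * b) = c / u" "c \<in> D" "u \<in> D" "u \<notin> m"
      unfolding localization_def by auto
    have "u \<noteq> 0" using cu m0 by auto
    then have "u = c * (a * b)" using cu nz by (simp add: field_simps)
    moreover have "c * (a * b) \<in> m" using mid cu ab unfolding ideal_of_def by blast
    ultimately show False using cu by simp
  qed
  then show ?thesis unfolding Spec_def prime_ideal_of_def using mid mD by blast
qed

lemma valuation_localization_compare:
  assumes p: "0 \<in> p" and val: "valuation_domain (localization D p)"
    and ac: "a \<in> D" "c \<in> D" "a \<noteq> 0" "c \<noteq> 0"
  shows "\<exists>t\<in>D. t \<notin> p \<and> (t * c / a \<in> D \<or> t * a / c \<in> D)"
proof -
  have "c / a \<in> localization D p \<or> a / c \<in> localization D p"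
    using val ac unfolding valuation_domain_def by (metis divide_eq_0_iff inverse_divide)
  then obtain e t where "e \<in> D" "t \<in> D" "t \<notin> p" "c / a = e / t \<or> a / c = e / t"
    unfolding localization_def by blast
  moreover from this p have "t \<noteq> 0" by auto
  ultimately show ?thesis using ac by (auto simp: field_simps)
qed

lemma valuation_localization_common_divisor:
  assumes sub: "subring_of D" and p: "p \<in> Spec D" and val: "valuation_domain (localization D p)"
    and B: "finite B" "B \<noteq> {}" "B \<subseteq> D - {0}"
  shows "\<exists>a\<in>B. \<exists>s\<in>D. s \<notin> p \<and> (\<forall>b\<in>B. s * b / a \<in> D)"
  using B
proof (induction B rule: finite_ne_induct)
  case (singleton c)
  have "1 \<notin> p" using p ideal_with_one unfolding Spec_def prime_ideal_of_def by blast
  then show ?case using subring_one[OF sub] singleton by auto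
next
  case (insert c B)
  then obtain a s where as: "a \<in> B" "s \<in> D" "s \<notin> p" "\<forall>b\<in>B. s * b / a \<in> D" by auto
  have ac: "a \<in> D" "c \<in> D" "a \<noteq> 0" "c \<noteq> 0" using insert.prems as(1) by auto
  have p0: "0 \<in> p" using p unfolding Spec_def prime_ideal_of_def ideal_of_def by blast
  obtain t where t: "t \<in> D" "t \<notin> p" "t * c / a \<in> D \<or> t * a / c \<in> D"
    using valuation_localization_compare[OF p0 val ac] by blast
  have st: "s * t \<in> D" "s * t \<notin> p"
    using subring_mult[OF sub] as t p unfolding Spec_def prime_ideal_of_def by auto
  from t(3) show ?case
  proof
    assume tc: "t * c / a \<in> D"
    have "s * t * b / a \<in> D" if b: "b \<in> insert c B" for b
    proof (cases "b = c")
      case True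
      then have eq: "s * t * b / a = s * (t * c / a)" by simp
      show ?thesis unfolding eq by (rule subring_mult[OF sub as(2) tc])
    next
      case False
      have eq: "s * t * b / a = t * (s * b / a)" by simp
      show ?thesis unfolding eq by (rule subring_mult[OF sub t(1)]) (use as(4) False b in auto)
    qed
    then show ?thesis using as(1) st by blast
  next
    assume ta: "t * a / c \<in> D"
    have "s * t * b / c \<in> D" if b: "b \<in> insert c B" for b
    proof (cases "b = c")
      case True
      then show ?thesis using st ac by simp
    next
      case False
      have eq: "s * t * b / c = (s * b / a) * (t * a / c)" using ac by simp
      show ?thesis unfolding eq by (rule subring_mult[OF sub _ ta]) (use as(4) False b in auto)
    qed
    then show ?thesis using st by blast
  qed
qed

text \<open>A prime p with D_p a valuation domain is a t-ideal: for a finitely generated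
  nonzero (A) \<subseteq> p with least generator a and factor s, the element s/a lies in (D:(A)),
  so every x \<in> (A)^v satisfies xs = (xs/a)a \<in> p.\<close>

lemma valuation_localization_t_ideal:
  assumes sub: "subring_of D" and p: "p \<in> Spec D" and val: "valuation_domain (localization D p)"
  shows "t_ideal D p"
proof -
  have pid: "ideal_of D p" using p unfolding Spec_def prime_ideal_of_def by blast
  have "t_op D p \<subseteq> p"
  proof
    fix x assume "x \<in> t_op D p"
    then obtain A where A: "x \<in> v_op D (gen_by D A)" "gen_by D A \<subseteq> p"
      "gen_by D A \<noteq> {0}" "finite A" unfolding t_op_def by blast
    have Ap: "A \<subseteq> p" using gen_by_self[OF sub A(4)] A(2) by blast
    have pD: "p \<subseteq> D" using pid unfolding ideal_of_def by blast
    with Ap have AD: "A \<subseteq> D" by blast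
    have "A - {0} \<noteq> {}" using A(3) gen_by_eq_zero_iff[OF sub A(4)] by blast
    then obtain a s where as: "a \<in> A - {0}" "s \<in> D" "s \<notin> p" "\<forall>b\<in>A - {0}. s * b / a \<in> D"
      using valuation_localization_common_divisor[OF sub p val, of "A - {0}"] A(4) AD by blast
    have "s / a \<in> colon D (gen_by D A)"
      using colon_gen_by[OF sub A(4)] as(4) subring_zero[OF sub] by (auto simp: mult.commute)
    then have "x * (s / a) \<in> D" using A(1) unfolding v_op_def colon_def by blast
    moreover have "a \<in> p" using as(1) Ap by blast
    ultimately have "(x * (s / a)) * a \<in> p" using pid unfolding ideal_of_def by blast
    moreover have "(x * (s / a)) * a = x * s" using as(1) by simp
    ultimately have "x * s \<in> p" by simp
    moreover have "x \<in> D" using v_op_subset[OF sub] A(1,2) pD by blast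
    ultimately show "x \<in> p" using p as(2,3) unfolding Spec_def prime_ideal_of_def by blast
  qed
  then show ?thesis by (rule t_idealI[OF sub pid])
qed

definition ideal_span :: "'a::field set \<Rightarrow> 'a set \<Rightarrow> 'a set" where
  "ideal_span D S = {x. \<exists>B. finite B \<and> B \<subseteq> S \<and> x \<in> gen_by D B}"

lemma ideal_span_ideal:
  assumes sub: "subring_of D" and S: "S \<subseteq> D"
  shows "ideal_of D (ideal_span D S)"
  unfolding ideal_of_def
proof (intro conjI ballI)
  show "ideal_span D S \<subseteq> D"
    unfolding ideal_span_def using S gen_by_least[OF _ module_of_subring[OF sub]] by blast
  have "0 \<in> gen_by D {}" using gen_by_module[OF sub] unfolding module_of_def by blast
  then show "0 \<in> ideal_span D S" unfolding ideal_span_def by blast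
  show "x + y \<in> ideal_span D S" if xy: "x \<in> ideal_span D S" "y \<in> ideal_span D S" for x y
  proof -
    obtain B1 B2 where B: "finite B1" "B1 \<subseteq> S" "x \<in> gen_by D B1"
      "finite B2" "B2 \<subseteq> S" "y \<in> gen_by D B2" using xy unfolding ideal_span_def by blast
    have "x \<in> gen_by D (B1 \<union> B2)" "y \<in> gen_by D (B1 \<union> B2)"
      using gen_by_mono[OF sub, of "B1 \<union> B2"] B by blast+
    then have "x + y \<in> gen_by D (B1 \<union> B2)" using gen_by_module[OF sub] unfolding module_of_def by blast
    then show ?thesis unfolding ideal_span_def using B by blast
  qed
  show "d * x \<in> ideal_span D S" if dx: "d \<in> D" "x \<in> ideal_span D S" for d x
  proof -
    obtain B where B: "finite B" "B \<subseteq> S" "x \<in> gen_by D B" using dx unfolding ideal_span_def by blast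
    then have "d * x \<in> gen_by D B" using dx gen_by_module[OF sub, of B] unfolding module_of_def by blast
    then show ?thesis unfolding ideal_span_def using B by blast
  qed
qed

lemma ideal_span_superset:
  assumes "subring_of D" shows "S \<subseteq> ideal_span D S"
proof
  fix s assume "s \<in> S"
  moreover have "s \<in> gen_by D {s}" using gen_by_self[OF assms, of "{s}"] by simp
  ultimately show "s \<in> ideal_span D S" unfolding ideal_span_def by (intro CollectI exI[of _ "{s}"]) simp
qed

lemma ideal_span_finite:
  assumes sub: "subring_of D" and A: "finite A" "A \<subseteq> ideal_span D S"
  obtains B where "finite B" "B \<subseteq> S" "gen_by D A \<subseteq> gen_by D B"
proof -
  have "\<forall>a\<in>A. \<exists>B. finite B \<and> B \<subseteq> S \<and> a \<in> gen_by D B"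
    using A(2) unfolding ideal_span_def by blast
  then obtain BB where BB: "\<And>a. a \<in> A \<Longrightarrow> finite (BB a) \<and> BB a \<subseteq> S \<and> a \<in> gen_by D (BB a)"
    by metis
  define B where "B = \<Union>(BB ` A)"
  have fB: "finite B" "B \<subseteq> S" using A(1) BB unfolding B_def by auto
  have "A \<subseteq> gen_by D B" using BB gen_by_mono[OF sub fB(1)] unfolding B_def by blast
  then have "gen_by D A \<subseteq> gen_by D B" by (rule gen_by_least[OF A(1) gen_by_module[OF sub]])
  then show ?thesis using that fB by blast
qed

lemma quasi_compact_avoid:
  assumes qc: "zariski_quasi_compact D Y" and S: "S \<subseteq> D" and avoid: "\<forall>p\<in>Y. \<not> S \<subseteq> p"
  shows "\<exists>F\<subseteq>S. finite F \<and> (\<forall>p\<in>Y. \<not> F \<subseteq> p)"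
proof -
  have YS: "Y \<subseteq> Spec D" using qc unfolding zariski_quasi_compact_def by blast
  let ?\<A> = "(\<lambda>a. {a}) ` S"
  have "Y \<subseteq> (\<Union>T\<in>?\<A>. Spec D - zariski_V D T)"
  proof
    fix p assume p: "p \<in> Y"
    then obtain a where a: "a \<in> S" "a \<notin> p" using avoid by blast
    then have "p \<in> Spec D - zariski_V D {a}" using YS p unfolding zariski_V_def by blast
    then show "p \<in> (\<Union>T\<in>?\<A>. Spec D - zariski_V D T)" using a(1) by blast
  qed
  moreover have "\<forall>T\<in>?\<A>. T \<subseteq> D" using S by blast
  ultimately have "\<exists>\<B>\<subseteq>?\<A>. finite \<B> \<and> Y \<subseteq> (\<Union>T\<in>\<B>. Spec D - zariski_V D T)"
    using qc unfolding zariski_quasi_compact_def by blast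
  then obtain \<B> where \<B>: "\<B> \<subseteq> ?\<A>" "finite \<B>" "Y \<subseteq> (\<Union>T\<in>\<B>. Spec D - zariski_V D T)"
    by blast
  have "\<not> \<Union>\<B> \<subseteq> p" if p: "p \<in> Y" for p
  proof -
    obtain T where "T \<in> \<B>" "p \<notin> zariski_V D T" using \<B>(3) p by blast
    moreover obtain a where "T = {a}" using \<B>(1) \<open>T \<in> \<B>\<close> by blast
    ultimately show ?thesis using YS p unfolding zariski_V_def by blast
  qed
  moreover have "finite (\<Union>\<B>)" "\<Union>\<B> \<subseteq> S" using \<B>(1,2) by auto
  ultimately show ?thesis by blast
qed

text \<open>Given an open cover by the complements of V(S), S \<in> \<A>, the ideal generated by
  \<Union>\<A> lies in no t-maximal ideal, so it is not v-proper; a finite witness B \<subseteq> \<Union>\<A> of this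
  is met by finitely many members of \<A>, which then cover.\<close>

lemma t_maximal_quasi_compact:
  assumes sub: "subring_of D" and prime: "\<And>m. t_maximal D m \<Longrightarrow> m \<in> Spec D"
  shows "zariski_quasi_compact D {m. t_maximal D m}"
  unfolding zariski_quasi_compact_def
proof (intro conjI allI impI)
  let ?Y = "{m. t_maximal D m}"
  show "?Y \<subseteq> Spec D" using prime by blast
  fix \<A> assume "(\<forall>S\<in>\<A>. S \<subseteq> D) \<and> ?Y \<subseteq> (\<Union>S\<in>\<A>. Spec D - zariski_V D S)"
  then have AD: "\<Union>\<A> \<subseteq> D" and cov: "?Y \<subseteq> (\<Union>S\<in>\<A>. Spec D - zariski_V D S)" by blast+
  let ?I = "ideal_span D (\<Union>\<A>)"
  have "\<not> v_proper D ?I"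
  proof
    assume "v_proper D ?I"
    then obtain P where P: "t_maximal D P" "?I \<subseteq> P"
      using v_proper_in_t_maximal[OF sub ideal_span_ideal[OF sub AD]] by blast
    then obtain S where "S \<in> \<A>" "\<not> S \<subseteq> P" using cov unfolding zariski_V_def by blast
    then show False using P ideal_span_superset[OF sub, of "\<Union>\<A>"] by blast
  qed
  then obtain A where A: "finite A" "A \<subseteq> ?I" "gen_by D A \<noteq> {0}" "1 \<in> v_op D (gen_by D A)"
    unfolding v_proper_def by blast
  then obtain B where B: "finite B" "B \<subseteq> \<Union>\<A>" "gen_by D A \<subseteq> gen_by D B"
    using ideal_span_finite[OF sub] by blast
  have B0: "gen_by D B \<noteq> {0}" "1 \<in> v_op D (gen_by D B)"
    using A B(3) v_op_mono[OF B(3)] gen_by_module[OF sub, of A] unfolding module_of_def by blast+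
  have "\<forall>b\<in>B. \<exists>S\<in>\<A>. b \<in> S" using B(2) by blast
  then obtain SS where SS: "\<And>b. b \<in> B \<Longrightarrow> SS b \<in> \<A> \<and> b \<in> SS b" by metis
  have "?Y \<subseteq> (\<Union>S\<in>SS ` B. Spec D - zariski_V D S)"
  proof
    fix m assume m: "m \<in> ?Y"
    have "\<not> B \<subseteq> m"
    proof
      assume "B \<subseteq> m"
      moreover have "v_proper D m"
        using m proper_t_ideal_v_proper[OF sub] unfolding t_maximal_def by blast
      ultimately show False using B(1) B0 unfolding v_proper_def by blast
    qed
    then obtain b where "b \<in> B" "b \<notin> m" by blast
    then show "m \<in> (\<Union>S\<in>SS ` B. Spec D - zariski_V D S)"
      using SS prime m unfolding zariski_V_def by blast
  qed
  moreover have "SS ` B \<subseteq> \<A>" "finite (SS ` B)" using SS B(1) by auto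
  ultimately show "\<exists>\<B>\<subseteq>\<A>. finite \<B> \<and> ?Y \<subseteq> (\<Union>S\<in>\<B>. Spec D - zariski_V D S)" by blast
qed

text \<open>Conversely, if D = \<Inter>{D_p : p \<in> Y} with Y quasi-compact, then every nonzero
  t-maximal ideal m lies in a member of Y: otherwise finitely many elements of m, together
  with some b \<noteq> 0 in m, generate a finitely generated ideal (A) with (D:(A)) \<subseteq> \<Inter> D_p = D,
  i.e. (A)^v = D, contradicting that m is a proper t-ideal.\<close>

lemma t_maximal_below_quasi_compact:
  assumes sub: "subring_of D" and qc: "zariski_quasi_compact D Y"
    and inter: "\<Inter>(localization D ` Y) = D" and m: "t_maximal D m" "m \<noteq> {0}"
  shows "\<exists>p\<in>Y. m \<subseteq> p"
proof (rule ccontr)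
  assume "\<not> (\<exists>p\<in>Y. m \<subseteq> p)"
  have mid: "ideal_of D m" and mt: "t_ideal D m" "m \<noteq> D"
    using m(1) unfolding t_maximal_def t_ideal_def by auto
  then have mD: "m \<subseteq> D" unfolding ideal_of_def by blast
  obtain F where F: "F \<subseteq> m" "finite F" "\<forall>p\<in>Y. \<not> F \<subseteq> p"
    using quasi_compact_avoid[OF qc mD] \<open>\<not> (\<exists>p\<in>Y. m \<subseteq> p)\<close> by blast
  obtain b where b: "b \<in> m" "b \<noteq> 0" using mid m(2) unfolding ideal_of_def by blast
  define A where "A = insert b F"
  have A: "finite A" "A \<subseteq> m" "gen_by D A \<noteq> {0}"
    using F b gen_by_eq_zero_iff[OF sub, of A] unfolding A_def by auto
  have YS: "Y \<subseteq> Spec D" using qc unfolding zariski_quasi_compact_def by blast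
  have "colon D (gen_by D A) \<subseteq> localization D p" if p: "p \<in> Y" for p
  proof -
    obtain a where a: "a \<in> F" "a \<notin> p" using F(3) p by blast
    have "0 \<in> p" using YS p unfolding Spec_def prime_ideal_of_def ideal_of_def by blast
    then show ?thesis
      using colon_gen_by_subset_localization[OF sub A(1), of a p] a F(1) mD unfolding A_def by blast
  qed
  then have "colon D (gen_by D A) \<subseteq> D" using inter by blast
  then have "1 \<in> v_op D (gen_by D A)" by (simp add: one_in_v_op_iff)
  then show False using proper_t_ideal_v_proper[OF sub mt] A unfolding v_proper_def by blast
qed

lemma PvMD_quasi_compact_representation:
  assumes qf: "integral_domain_with_qf_UNIV D" and pv: "PvMD D"
  shows "zariski_quasi_compact D {m. t_maximal D m}"
    and "essential_representation D (localization D ` {m. t_maximal D m})"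
proof -
  have sub: "subring_of D" using qf unfolding integral_domain_with_qf_UNIV_def by blast
  have val: "valuation_domain (localization D m)" if "t_maximal D m" for m
    using pv that unfolding PvMD_def by blast
  have prime: "m \<in> Spec D" if "t_maximal D m" for m
    using t_maximal_prime[OF sub that val[OF that]] .
  show "zariski_quasi_compact D {m. t_maximal D m}" by (rule t_maximal_quasi_compact[OF sub prime])
  have "essential_valuation_overring D (localization D m)" if m: "t_maximal D m" for m
    unfolding essential_valuation_overring_def
    using val[OF m] prime[OF m] Inter_localization_t_maximal[OF sub] m by blast
  then show "essential_representation D (localization D ` {m. t_maximal D m})"
    unfolding essential_representation_def using Inter_localization_t_maximal[OF sub] by blast
qed

lemma quasi_compact_representation_PvMD:
  assumes qf: "integral_domain_with_qf_UNIV D" and qc: "zariski_quasi_compact D Y"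
    and rep: "essential_representation D (localization D ` Y)"
  shows "PvMD D"
  unfolding PvMD_def
proof (intro allI impI)
  fix m assume m: "t_maximal D m"
  have sub: "subring_of D" using qf unfolding integral_domain_with_qf_UNIV_def by blast
  show "valuation_domain (localization D m)"
  proof (cases "m = {0}")
    case True
    then show ?thesis using localization_zero[OF qf] valuation_domain_UNIV by simp
  next
    case False
    have inter: "\<Inter>(localization D ` Y) = D" using rep unfolding essential_representation_def by blast
    obtain p where p: "p \<in> Y" "m \<subseteq> p"
      using t_maximal_below_quasi_compact[OF sub qc inter m False] by blast
    have pS: "p \<in> Spec D" using qc p(1) unfolding zariski_quasi_compact_def by blast
    have val: "valuation_domain (localization D p)"
      using rep p(1) unfolding essential_representation_def essential_valuation_overring_def by blast
    have "t_ideal D p" "p \<noteq> D"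
      using valuation_localization_t_ideal[OF sub pS val] pS unfolding Spec_def prime_ideal_of_def by auto
    then have "p = m" using m p(2) unfolding t_maximal_def by blast
    then show ?thesis using val by simp
  qed
qed

theorem corollary2p7:
  fixes D :: "'a::field set"
  assumes "integral_domain_with_qf_UNIV D"
  shows "PvMD D \<longleftrightarrow>
    (essential_domain D \<and>
     (\<exists>Y. zariski_quasi_compact D Y \<and> essential_representation D (localization D ` Y)))"
proof
  assume "PvMD D"
  then show "essential_domain D \<and>
      (\<exists>Y. zariski_quasi_compact D Y \<and> essential_representation D (localization D ` Y))"
    using PvMD_quasi_compact_representation[OF assms] unfolding essential_domain_def by blast
next
  assume "essential_domain D \<and>
      (\<exists>Y. zariski_quasi_compact D Y \<and> essential_representation D (localization D ` Y))"
  then show "PvMD D" using quasi_compact_representation_PvMD[OF assms] by blast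
qed

end
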